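(* Let $Z$ be an $n\times n$ matrix of i.i.d. standard normal entries. There is a universal constant $C>0$ such that $$\mathrm{Var}(\mathrm{TV}(Z)) \leq C\,n(n-1).$$
   Context: $\mathrm{TV}(\theta) = \sum_{(u,v)\in E_n}|\theta_u-\theta_v|$, where $E_n$ is the edge set of the $n\times n$ grid graph on $[n]\times[n]$ (pairs of vertices at $\ell_1$-distance 1). *)

theory Defs
  imports "HOL-Probability.Probability"
begin

definition grid :: "nat \<Rightarrow> (nat \<times> nat) set" where
  "grid n = {1..n} \<times> {1..n}"

definition l1dist :: "nat \<times> nat \<Rightarrow> nat \<times> nat \<Rightarrow> int" where
  "l1dist u v = \<bar>int (fst u) - int (fst v)\<bar> + \<bar>int (snd u) - int (snd v)\<bar>"

text \<open>Edge set E_n: pairs of vertices at l1-distance 1; each (unordered) edge is listed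
  exactly once, oriented so that the coordinate sum increases.\<close>
definition grid_edges :: "nat \<Rightarrow> ((nat \<times> nat) \<times> (nat \<times> nat)) set" where
  "grid_edges n = {(u, v). u \<in> grid n \<and> v \<in> grid n \<and> l1dist u v = 1
                          \<and> fst u + snd u < fst v + snd v}"

definition TV :: "nat \<Rightarrow> (nat \<times> nat \<Rightarrow> real) \<Rightarrow> real" where
  "TV n \<theta> = (\<Sum>(u, v)\<in>grid_edges n. \<bar>\<theta> u - \<theta> v\<bar>)"

definition gauss_matrix :: "nat \<Rightarrow> (nat \<times> nat \<Rightarrow> real) measure" where
  "gauss_matrix n = PiM (grid n) (\<lambda>_. density lborel std_normal_density)"

end

theory Submission
  imports Defs
begin

text \<open>
  TV(Z) is the sum of the edge variables \<bar>Z u - Z v\<bar>, so its variance is the sum of their pairwise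
  covariances. For two edges without a common vertex the variables depend on disjoint sets of
  independent entries, so their covariance vanishes. Otherwise the covariance is at most the mean
  of the two variances, and each variance is at most E (Z u - Z v)^2 \<le> 2 E (Z u)^2 + 2 E (Z v)^2 = 4.
  Every grid edge meets at most 8 edges (itself included) and there are at most 2n(n - 1) edges,
  so Var TV(Z) \<le> 4 \<cdot> 8 \<cdot> 2n(n - 1).
\<close>

lemma integrable_mult_if_square_integrable:
  fixes X Y :: "'a \<Rightarrow> real"
  assumes [measurable]: "X \<in> borel_measurable M" "Y \<in> borel_measurable M"
    and "integrable M (\<lambda>\<omega>. (X \<omega>)\<^sup>2)" "integrable M (\<lambda>\<omega>. (Y \<omega>)\<^sup>2)"
  shows "integrable M (\<lambda>\<omega>. X \<omega> * Y \<omega>)"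
proof (rule Bochner_Integration.integrable_bound)
  show "integrable M (\<lambda>\<omega>. ((X \<omega>)\<^sup>2 + (Y \<omega>)\<^sup>2) / 2)"
    using assms by auto
  have "\<bar>x * y\<bar> \<le> (x\<^sup>2 + y\<^sup>2) / 2" for x y :: real
    using sum_squares_bound[of "\<bar>x\<bar>" "\<bar>y\<bar>"] by (simp add: abs_mult)
  then show "AE \<omega> in M. norm (X \<omega> * Y \<omega>) \<le> norm (((X \<omega>)\<^sup>2 + (Y \<omega>)\<^sup>2) / 2)"
    by simp
qed simp

context prob_space
begin

definition covariance :: "('a \<Rightarrow> real) \<Rightarrow> ('a \<Rightarrow> real) \<Rightarrow> real" where
  "covariance X Y = expectation (\<lambda>\<omega>. (X \<omega> - expectation X) * (Y \<omega> - expectation Y))"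

lemma integrable_centered_square:
  fixes X :: "'a \<Rightarrow> real"
  assumes [measurable]: "X \<in> borel_measurable M" and "integrable M (\<lambda>\<omega>. (X \<omega>)\<^sup>2)"
  shows "integrable M (\<lambda>\<omega>. (X \<omega> - c)\<^sup>2)"
proof -
  have "integrable M X"
    using assms by (rule square_integrable_imp_integrable)
  then show ?thesis
    using assms by (simp add: power2_diff)
qed

lemma integrable_centered_product:
  fixes X Y :: "'a \<Rightarrow> real"
  assumes [measurable]: "X \<in> borel_measurable M" "Y \<in> borel_measurable M"
    and "integrable M (\<lambda>\<omega>. (X \<omega>)\<^sup>2)" "integrable M (\<lambda>\<omega>. (Y \<omega>)\<^sup>2)"
  shows "integrable M (\<lambda>\<omega>. (X \<omega> - c) * (Y \<omega> - d))"
  by (rule integrable_mult_if_square_integrable)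
     (use assms integrable_centered_square in auto)

lemma variance_sum:
  fixes X :: "'i \<Rightarrow> 'a \<Rightarrow> real"
  assumes "finite E"
    and [measurable]: "\<And>e. e \<in> E \<Longrightarrow> X e \<in> borel_measurable M"
    and square_int: "\<And>e. e \<in> E \<Longrightarrow> integrable M (\<lambda>\<omega>. (X e \<omega>)\<^sup>2)"
  shows "variance (\<lambda>\<omega>. \<Sum>e\<in>E. X e \<omega>) = (\<Sum>e\<in>E. \<Sum>f\<in>E. covariance (X e) (X f))"
proof -
  have int: "integrable M (X e)" if "e \<in> E" for e
    using that square_int by (intro square_integrable_imp_integrable[of "X e"]) auto
  have "(\<Sum>e\<in>E. X e \<omega>) - expectation (\<lambda>\<omega>. \<Sum>e\<in>E. X e \<omega>)
      = (\<Sum>e\<in>E. X e \<omega> - expectation (X e))" for \<omega>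
    using int by (simp add: sum_subtractf)
  then have "variance (\<lambda>\<omega>. \<Sum>e\<in>E. X e \<omega>)
      = expectation (\<lambda>\<omega>. \<Sum>e\<in>E. \<Sum>f\<in>E. (X e \<omega> - expectation (X e)) * (X f \<omega> - expectation (X f)))"
    by (simp add: power2_eq_square sum_product)
  also have "\<dots> = (\<Sum>e\<in>E. \<Sum>f\<in>E. covariance (X e) (X f))"
    unfolding covariance_def using square_int
    by (simp add: integrable_centered_product)
  finally show ?thesis .
qed

lemma covariance_le_mean_variance:
  fixes X Y :: "'a \<Rightarrow> real"
  assumes [measurable]: "X \<in> borel_measurable M" "Y \<in> borel_measurable M"
    and "integrable M (\<lambda>\<omega>. (X \<omega>)\<^sup>2)" "integrable M (\<lambda>\<omega>. (Y \<omega>)\<^sup>2)"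
  shows "covariance X Y \<le> (variance X + variance Y) / 2"
proof -
  let ?X = "\<lambda>\<omega>. X \<omega> - expectation X" and ?Y = "\<lambda>\<omega>. Y \<omega> - expectation Y"
  have pointwise: "x * y \<le> (x\<^sup>2 + y\<^sup>2) / 2" for x y :: real
    using sum_squares_bound[of x y] by simp
  have "covariance X Y \<le> expectation (\<lambda>\<omega>. ((?X \<omega>)\<^sup>2 + (?Y \<omega>)\<^sup>2) / 2)"
    unfolding covariance_def
  proof (rule integral_mono)
    show "integrable M (\<lambda>\<omega>. ?X \<omega> * ?Y \<omega>)"
      using assms by (rule integrable_centered_product)
    show "integrable M (\<lambda>\<omega>. ((?X \<omega>)\<^sup>2 + (?Y \<omega>)\<^sup>2) / 2)"
      using assms integrable_centered_square by simp
  qed (rule pointwise)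
  also have "\<dots> = (variance X + variance Y) / 2"
    using assms by (simp add: integrable_centered_square)
  finally show ?thesis .
qed

lemma covariance_eq_0_if_indep:
  fixes X Y :: "'a \<Rightarrow> real"
  assumes indep: "indep_var borel X borel Y" and "integrable M X" "integrable M Y"
  shows "covariance X Y = 0"
proof -
  have "indep_var borel (\<lambda>\<omega>. X \<omega> - expectation X) borel (\<lambda>\<omega>. Y \<omega> - expectation Y)"
    using indep_var_compose[OF indep, of "\<lambda>x. x - expectation X" borel "\<lambda>y. y - expectation Y" borel]
    by (simp add: comp_def)
  then have "covariance X Y = expectation (\<lambda>\<omega>. X \<omega> - expectation X) * expectation (\<lambda>\<omega>. Y \<omega> - expectation Y)"
    unfolding covariance_def using assms by (intro indep_var_lebesgue_integral) auto
  also have "\<dots> = 0"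
    using assms by (simp add: prob_space)
  finally show ?thesis .
qed

lemma variance_le_second_moment:
  fixes X :: "'a \<Rightarrow> real"
  assumes [measurable]: "X \<in> borel_measurable M" and "integrable M (\<lambda>\<omega>. (X \<omega>)\<^sup>2)"
  shows "variance X \<le> expectation (\<lambda>\<omega>. (X \<omega>)\<^sup>2)"
proof -
  have "integrable M X"
    using assms by (rule square_integrable_imp_integrable)
  with assms show ?thesis
    by (simp add: variance_eq)
qed

end

lemma
  fixes f :: "_ \<Rightarrow> _::{banach, second_countable_topology}"
  assumes M: "\<And>i. i \<in> I \<Longrightarrow> prob_space (M i)" and "i \<in> I" and f: "integrable (M i) f"
  shows integrable_PiM_component: "integrable (PiM I M) (\<lambda>\<omega>. f (\<omega> i))"
    and integral_PiM_component: "(\<integral>\<omega>. f (\<omega> i) \<partial>PiM I M) = integral\<^sup>L (M i) f"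
proof -
  have component: "(\<lambda>\<omega>. \<omega> i) \<in> measurable (PiM I M) (M i)"
    using \<open>i \<in> I\<close> by simp
  have distr: "distr (PiM I M) (M i) (\<lambda>\<omega>. \<omega> i) = M i"
    using M \<open>i \<in> I\<close> by (rule distr_PiM_component)
  show "integrable (PiM I M) (\<lambda>\<omega>. f (\<omega> i))"
    using integrable_distr_eq[OF component, of f] distr f by simp
  show "(\<integral>\<omega>. f (\<omega> i) \<partial>PiM I M) = integral\<^sup>L (M i) f"
    using integral_distr[OF component, of f] distr f by simp
qed

lemma indep_vars_PiM_components:
  assumes M: "\<And>i. i \<in> I \<Longrightarrow> prob_space (M i)"
  shows "prob_space.indep_vars (PiM I M) M (\<lambda>i \<omega>. \<omega> i) I"
proof -
  interpret prob_space "PiM I M"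
    using M by (rule prob_space_PiM)
  show ?thesis
  proof (cases "I = {}")
    case True
    then show ?thesis
      unfolding indep_vars_def indep_sets_def by simp
  next
    case False
    have "distr (PiM I M) (PiM I M) (\<lambda>\<omega>. \<lambda>i\<in>I. \<omega> i) = distr (PiM I M) (PiM I M) (\<lambda>\<omega>. \<omega>)"
      by (rule distr_cong) (auto simp: space_PiM PiE_def extensional_restrict)
    also have "\<dots> = PiM I (\<lambda>i. distr (PiM I M) (M i) (\<lambda>\<omega>. \<omega> i))"
      by (auto intro!: PiM_cong simp: distr_PiM_component M)
    finally show ?thesis
      using False by (subst indep_vars_iff_distr_eq_PiM') auto
  qed
qed

lemma indep_var_PiM_restrict:
  assumes M: "\<And>i. i \<in> I \<Longrightarrow> prob_space (M i)"
    and "J \<inter> K = {}" "J \<subseteq> I" "K \<subseteq> I"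
    and "f \<in> borel_measurable (PiM J M)" "g \<in> borel_measurable (PiM K M)"
  shows "prob_space.indep_var (PiM I M) borel (\<lambda>\<omega>. f (restrict \<omega> J)) borel (\<lambda>\<omega>. g (restrict \<omega> K))"
proof -
  interpret prob_space "PiM I M"
    using M by (rule prob_space_PiM)
  have "indep_var (PiM J M) (\<lambda>\<omega>. restrict \<omega> J) (PiM K M) (\<lambda>\<omega>. restrict \<omega> K)"
    using indep_var_restrict[OF indep_vars_PiM_components[OF M]] assms(2-4) by simp
  from indep_var_compose[OF this assms(5,6)] show ?thesis
    by (simp add: comp_def)
qed

locale iid_random_field =
  fixes N :: "real measure" and I :: "'i set"
  assumes prob_space_N: "prob_space N"
    and sets_N [measurable_cong]: "sets N = sets borel"
    and square_integrable_N: "integrable N (\<lambda>x. x\<^sup>2)"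

sublocale iid_random_field \<subseteq> P: prob_space "PiM I (\<lambda>_. N)"
  using prob_space_N by (rule prob_space_PiM)

context iid_random_field
begin

lemma
  assumes "a \<in> I" "b \<in> I"
  shows square_integrable_increment: "integrable (PiM I (\<lambda>_. N)) (\<lambda>\<omega>. (\<omega> a - \<omega> b)\<^sup>2)"
    and second_moment_increment_le:
      "P.expectation (\<lambda>\<omega>. (\<omega> a - \<omega> b)\<^sup>2) \<le> 4 * (\<integral>x. x\<^sup>2 \<partial>N)"
proof -
  have int: "integrable (PiM I (\<lambda>_. N)) (\<lambda>\<omega>. (\<omega> i)\<^sup>2)"
    and moment: "P.expectation (\<lambda>\<omega>. (\<omega> i)\<^sup>2) = (\<integral>x. x\<^sup>2 \<partial>N)" if "i \<in> I" for i
    using integrable_PiM_component[of I "\<lambda>_. N"] integral_PiM_component[of I "\<lambda>_. N"]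
      prob_space_N square_integrable_N that by auto
  have bound: "(x - y)\<^sup>2 \<le> 2 * x\<^sup>2 + 2 * y\<^sup>2" for x y :: real
    using sum_squares_bound[of x "-y"] by (simp add: power2_diff)
  have int_bound: "integrable (PiM I (\<lambda>_. N)) (\<lambda>\<omega>. 2 * (\<omega> a)\<^sup>2 + 2 * (\<omega> b)\<^sup>2)"
    using int assms by auto
  show int_incr: "integrable (PiM I (\<lambda>_. N)) (\<lambda>\<omega>. (\<omega> a - \<omega> b)\<^sup>2)"
    by (rule Bochner_Integration.integrable_bound[OF int_bound]) (use assms bound in auto)
  have "P.expectation (\<lambda>\<omega>. (\<omega> a - \<omega> b)\<^sup>2) \<le> P.expectation (\<lambda>\<omega>. 2 * (\<omega> a)\<^sup>2 + 2 * (\<omega> b)\<^sup>2)"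
    using int_incr int_bound bound by (rule integral_mono)
  also have "\<dots> = 4 * (\<integral>x. x\<^sup>2 \<partial>N)"
    using int moment assms by simp
  finally show "P.expectation (\<lambda>\<omega>. (\<omega> a - \<omega> b)\<^sup>2) \<le> 4 * (\<integral>x. x\<^sup>2 \<partial>N)" .
qed

lemma
  assumes "a \<in> I" "b \<in> I"
  shows abs_increment_measurable: "(\<lambda>\<omega>. \<bar>\<omega> a - \<omega> b\<bar>) \<in> borel_measurable (PiM I (\<lambda>_. N))"
    and square_integrable_abs_increment: "integrable (PiM I (\<lambda>_. N)) (\<lambda>\<omega>. \<bar>\<omega> a - \<omega> b\<bar>\<^sup>2)"
  using assms square_integrable_increment[OF assms] by simp_all

lemma variance_abs_increment_le:
  assumes "a \<in> I" "b \<in> I"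
  shows "P.variance (\<lambda>\<omega>. \<bar>\<omega> a - \<omega> b\<bar>) \<le> 4 * (\<integral>x. x\<^sup>2 \<partial>N)"
proof -
  have "P.variance (\<lambda>\<omega>. \<bar>\<omega> a - \<omega> b\<bar>) \<le> P.expectation (\<lambda>\<omega>. \<bar>\<omega> a - \<omega> b\<bar>\<^sup>2)"
    using abs_increment_measurable[OF assms] square_integrable_abs_increment[OF assms]
    by (rule P.variance_le_second_moment)
  also have "\<dots> \<le> 4 * (\<integral>x. x\<^sup>2 \<partial>N)"
    using second_moment_increment_le[OF assms] by simp
  finally show ?thesis .
qed

lemma covariance_abs_increments_le:
  assumes "a \<in> I" "b \<in> I" "c \<in> I" "d \<in> I"
  shows "P.covariance (\<lambda>\<omega>. \<bar>\<omega> a - \<omega> b\<bar>) (\<lambda>\<omega>. \<bar>\<omega> c - \<omega> d\<bar>)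
           \<le> (if {a, b} \<inter> {c, d} \<noteq> {} then 4 * (\<integral>x. x\<^sup>2 \<partial>N) else 0)"
proof (cases "{a, b} \<inter> {c, d} \<noteq> {}")
  case True
  have "P.covariance (\<lambda>\<omega>. \<bar>\<omega> a - \<omega> b\<bar>) (\<lambda>\<omega>. \<bar>\<omega> c - \<omega> d\<bar>)
      \<le> (P.variance (\<lambda>\<omega>. \<bar>\<omega> a - \<omega> b\<bar>) + P.variance (\<lambda>\<omega>. \<bar>\<omega> c - \<omega> d\<bar>)) / 2"
    using assms
    by (intro P.covariance_le_mean_variance abs_increment_measurable square_integrable_abs_increment)
  with True variance_abs_increment_le[OF assms(1,2)] variance_abs_increment_le[OF assms(3,4)]
  show ?thesis
    by simp
next
  case False
  have "P.indep_var borel (\<lambda>\<omega>. (\<lambda>x. \<bar>x a - x b\<bar>) (restrict \<omega> {a, b}))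
      borel (\<lambda>\<omega>. (\<lambda>x. \<bar>x c - x d\<bar>) (restrict \<omega> {c, d}))"
    using False assms by (intro indep_var_PiM_restrict prob_space_N) auto
  then have "P.indep_var borel (\<lambda>\<omega>. \<bar>\<omega> a - \<omega> b\<bar>) borel (\<lambda>\<omega>. \<bar>\<omega> c - \<omega> d\<bar>)"
    by simp
  moreover have "integrable (PiM I (\<lambda>_. N)) (\<lambda>\<omega>. \<bar>\<omega> a - \<omega> b\<bar>)"
    and "integrable (PiM I (\<lambda>_. N)) (\<lambda>\<omega>. \<bar>\<omega> c - \<omega> d\<bar>)"
    using assms abs_increment_measurable square_integrable_abs_increment
    by (auto intro: P.square_integrable_imp_integrable)
  ultimately show ?thesis
    using False by (simp add: P.covariance_eq_0_if_indep)
qed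

lemma variance_edge_sum_le:
  fixes E :: "('i \<times> 'i) set"
  assumes "finite E"
    and endpoints: "\<And>u v. (u, v) \<in> E \<Longrightarrow> u \<in> I \<and> v \<in> I"
    and degree: "\<And>e. e \<in> E \<Longrightarrow> card {f \<in> E. {fst e, snd e} \<inter> {fst f, snd f} \<noteq> {}} \<le> d"
  shows "P.variance (\<lambda>\<omega>. \<Sum>(u, v)\<in>E. \<bar>\<omega> u - \<omega> v\<bar>) \<le> 4 * (\<integral>x. x\<^sup>2 \<partial>N) * d * card E"
proof -
  let ?m = "\<integral>x. x\<^sup>2 \<partial>N" and ?X = "\<lambda>e \<omega>. \<bar>\<omega> (fst e) - \<omega> (snd e)\<bar>"
  have in_I: "fst e \<in> I" "snd e \<in> I" if "e \<in> E" for e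
    using endpoints[of "fst e" "snd e"] that by auto
  have row: "(\<Sum>f\<in>E. P.covariance (?X e) (?X f)) \<le> 4 * ?m * d" if "e \<in> E" for e
  proof -
    have "(\<Sum>f\<in>E. P.covariance (?X e) (?X f))
        \<le> (\<Sum>f\<in>E. if {fst e, snd e} \<inter> {fst f, snd f} \<noteq> {} then 4 * ?m else 0)"
      using that in_I by (intro sum_mono covariance_abs_increments_le) auto
    also have "\<dots> = 4 * ?m * card {f \<in> E. {fst e, snd e} \<inter> {fst f, snd f} \<noteq> {}}"
      using \<open>finite E\<close> by (simp add: sum.inter_filter[symmetric])
    also have "\<dots> \<le> 4 * ?m * d"
      using degree[OF that] by (intro mult_left_mono) auto
    finally show ?thesis .
  qed
  have "P.variance (\<lambda>\<omega>. \<Sum>(u, v)\<in>E. \<bar>\<omega> u - \<omega> v\<bar>) = P.variance (\<lambda>\<omega>. \<Sum>e\<in>E. ?X e \<omega>)"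
    by (simp add: case_prod_beta)
  also have "\<dots> = (\<Sum>e\<in>E. \<Sum>f\<in>E. P.covariance (?X e) (?X f))"
    using \<open>finite E\<close> in_I
    by (intro P.variance_sum abs_increment_measurable square_integrable_abs_increment)
  also have "\<dots> \<le> (\<Sum>e\<in>E. 4 * ?m * d)"
    using row by (rule sum_mono)
  also have "\<dots> = 4 * ?m * d * card E"
    by simp
  finally show ?thesis .
qed

end

lemma grid_edge_cases:
  assumes "(u, v) \<in> grid_edges n"
  shows "u \<in> {1..<n} \<times> {1..n} \<and> v = (fst u + 1, snd u) \<or> u \<in> {1..n} \<times> {1..<n} \<and> v = (fst u, snd u + 1)"
  using assms unfolding grid_edges_def grid_def l1dist_def
  by (cases u; cases v) (simp, arith)

lemma finite_grid_edges: "finite (grid_edges n)"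
proof (rule finite_subset)
  show "grid_edges n \<subseteq> grid n \<times> grid n"
    unfolding grid_edges_def by auto
qed (simp add: grid_def)

lemma card_grid_edges_le: "card (grid_edges n) \<le> 2 * n * (n - 1)"
proof -
  let ?H = "{1..<n} \<times> {1..n}" and ?V = "{1..n} \<times> {1..<n}"
  have "grid_edges n \<subseteq> (\<lambda>u. (u, (fst u + 1, snd u))) ` ?H \<union> (\<lambda>u. (u, (fst u, snd u + 1))) ` ?V"
    using grid_edge_cases by fastforce
  then have "card (grid_edges n) \<le> card ((\<lambda>u. (u, (fst u + 1, snd u))) ` ?H \<union> (\<lambda>u. (u, (fst u, snd u + 1))) ` ?V)"
    by (rule card_mono[rotated]) simp
  also have "\<dots> \<le> card ?H + card ?V"
    by (rule order_trans[OF card_Un_le add_mono[OF card_image_le card_image_le]]) simp_all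
  also have "\<dots> = 2 * n * (n - 1)"
    by (simp add: card_cartesian_product)
  finally show ?thesis .
qed

lemma grid_edges_at_vertex:
  "{f \<in> grid_edges n. w \<in> {fst f, snd f}}
     \<subseteq> {(w, (fst w + 1, snd w)), (w, (fst w, snd w + 1)), ((fst w - 1, snd w), w), ((fst w, snd w - 1), w)}"
  by (force dest: grid_edge_cases)

lemma card_grid_edges_meeting_le:
  "card {f \<in> grid_edges n. {fst e, snd e} \<inter> {fst f, snd f} \<noteq> {}} \<le> 8"
proof -
  have four: "card {a, b, c, d} \<le> 4" for a b c d :: "(nat \<times> nat) \<times> (nat \<times> nat)"
    using card_length[of "[a, b, c, d]"] by simp
  have card_at: "card {f \<in> grid_edges n. w \<in> {fst f, snd f}} \<le> 4" for w
    by (rule order_trans[OF card_mono[OF _ grid_edges_at_vertex] four]) simp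
  have "{f \<in> grid_edges n. {fst e, snd e} \<inter> {fst f, snd f} \<noteq> {}}
      = {f \<in> grid_edges n. fst e \<in> {fst f, snd f}} \<union> {f \<in> grid_edges n. snd e \<in> {fst f, snd f}}"
    by auto
  also have "card \<dots> \<le> 4 + 4"
    by (rule order_trans[OF card_Un_le add_mono[OF card_at card_at]])
  finally show ?thesis
    by simp
qed

lemma
  shows prob_space_std_normal: "prob_space (density lborel std_normal_density)"
    and integrable_std_normal_square: "integrable (density lborel std_normal_density) (\<lambda>x. x\<^sup>2)"
    and integral_std_normal_square: "(\<integral>x. x\<^sup>2 \<partial>density lborel std_normal_density) = 1"
proof -
  show "prob_space (density lborel std_normal_density)"
    by (rule prob_space_normal_density) simp
  have "has_bochner_integral lborel (\<lambda>x. std_normal_density x * x\<^sup>2) 1"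
    using std_normal_moment_even[of 1] by simp
  then show "integrable (density lborel std_normal_density) (\<lambda>x. x\<^sup>2)"
    and "(\<integral>x. x\<^sup>2 \<partial>density lborel std_normal_density) = 1"
    by (subst integrable_density integral_density;
        auto simp: normal_density_nonneg has_bochner_integral_iff)+
qed

theorem lemma6p4:
  "\<exists>C>0. \<forall>n::nat. prob_space.variance (gauss_matrix n) (\<lambda>Z. TV n Z)
                     \<le> C * (real n * (real n - 1))"
proof (intro exI[of _ 64] conjI allI)
  fix n :: nat
  interpret iid_random_field "density lborel std_normal_density" "grid n"
    by (intro iid_random_field.intro prob_space_std_normal integrable_std_normal_square) simp
  have TV_eq: "TV n = (\<lambda>\<theta>. \<Sum>(u, v)\<in>grid_edges n. \<bar>\<theta> u - \<theta> v\<bar>)"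
    by (simp add: fun_eq_iff TV_def)
  have card_bound: "real (card (grid_edges n)) \<le> 2 * real n * (real n - 1)"
  proof -
    have "real (2 * n * (n - 1)) = 2 * real n * (real n - 1)"
      by (cases n) (simp_all add: algebra_simps)
    with card_grid_edges_le[of n] show ?thesis
      by (metis of_nat_le_iff)
  qed
  have "P.variance (TV n) \<le> 4 * (\<integral>x. x\<^sup>2 \<partial>density lborel std_normal_density) * real 8 * card (grid_edges n)"
    unfolding TV_eq
    by (rule variance_edge_sum_le[OF finite_grid_edges _ card_grid_edges_meeting_le])
       (simp add: grid_edges_def)
  also have "\<dots> \<le> 64 * (real n * (real n - 1))"
    using card_bound by (simp add: integral_std_normal_square)
  finally show "prob_space.variance (gauss_matrix n) (\<lambda>Z. TV n Z) \<le> 64 * (real n * (real n - 1))"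
    by (simp add: gauss_matrix_def)
qed simp

end
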